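(* Let $X$ be a real random variable with $X\ge -M$ almost surely for some $M>0$, $E(X)<0$, and $P(X>x)\sim x^{-\alpha}$ as $x\to\infty$ for some $\alpha\in(1,\infty)$. Let $(X_i)$ be IID with the law of $X$, and let $N$ be independent of $(X_i)$ with $P(N=k)=C k^{-(1+\eta)}$ for $k\in\{1,2,\dots\}$, where $\eta>0$ and $C$ is the normalising constant. Put $S_N=\sum_{k=1}^N X_k$. Then $$\alpha-1\le \mathbb{I}(S_N)\le \alpha+\eta-1.$$
   Context: For a real random variable $Y$, $\mathbb{I}(Y):=\sup\{s\ge0:E((Y^+)^s)<\infty\}$, where $y^+=\max(0,y)$. *)

theory Defs
  imports "HOL-Probability.Probability" "HOL-Library.Landau_Symbols"
begin

definition moment_index :: "'a measure \<Rightarrow> ('a \<Rightarrow> real) \<Rightarrow> ereal" where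
  "moment_index M Y =
     Sup (ereal ` {s. 0 \<le> s \<and> (\<integral>\<^sup>+ \<omega>. ennreal (max 0 (Y \<omega>) powr s) \<partial>M) < \<infinity>})"

end

theory Submission
  imports Defs
begin

text \<open>
  For \<open>p = s + 1 < \<alpha>\<close> the step \<open>X\<close> has a finite \<open>p\<close>-th positive moment, and since
  \<open>E X < 0\<close> and \<open>X \<ge> -B\<close> the function \<open>V y = (y\<^sup>+)\<^sup>p\<close> is a Lyapunov function:
  \<open>E V(y + X) + c (y\<^sup>+)\<^sup>s \<le> V y + K\<close>. Applied to the partial sums this gives
  \<open>E V(S\<^sub>n\<^sub>+\<^sub>1) + c E(S\<^sub>n\<^sup>+)\<^sup>s \<le> E V(S\<^sub>n) + K\<close>, and summation by parts against the nonincreasing weights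
  \<open>P(N = n)\<close> shows \<open>E(S\<^sub>N\<^sup>+)\<^sup>s < \<infinity>\<close>.

  Among \<open>n\<close> steps one exceeds \<open>2Bn\<close> with probability of order \<open>n\<^sup>1\<^sup>-\<^sup>\<alpha>\<close>, and then
  \<open>S\<^sub>n \<ge> Bn\<close> because the other steps are \<open>\<ge> -B\<close>. Hence \<open>P(N = n) E(S\<^sub>n\<^sup>+)\<^sup>s\<close> is of order at least
  \<open>n\<^sup>s\<^sup>-\<^sup>\<alpha>\<^sup>-\<^sup>\<eta>\<close>, which is not summable once \<open>s \<ge> \<alpha> + \<eta> - 1\<close>.
\<close>

lemma powr_le_tangent_line:
  fixes a b p :: real
  assumes "1 < p" "0 \<le> a" "0 \<le> b"
  shows "b powr p \<le> a powr p + p * b powr (p - 1) * (b - a)"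
proof -
  have young: "b powr (p-1) * a \<le> (b powr (p-1)) powr (p/(p-1)) / (p/(p-1)) + a powr p / p"
    using assms by (intro Youngs_inequality) (auto simp: field_simps)
  have "(b powr (p-1)) powr (p/(p-1)) = b powr p"
    using assms by (simp add: powr_powr)
  with young have "p * (b powr (p-1) * a) \<le> (p-1) * b powr p + a powr p"
    using assms by (simp add: field_simps)
  moreover have "b powr (p-1) * b = b powr p"
    using assms by (cases "b = 0") (auto simp: powr_diff)
  ultimately show ?thesis by (simp add: algebra_simps)
qed

lemma powr_add_le_two_powr:
  fixes u v p :: real
  assumes "0 \<le> u" "0 \<le> v" "0 < p"
  shows "(u + v) powr p \<le> 2 powr p * (u powr p + v powr p)"
proof -
  have "(u + v) powr p \<le> (2 * max u v) powr p" using assms by (intro powr_mono2) auto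
  also have "\<dots> = 2 powr p * max u v powr p" using assms by (simp add: powr_mult)
  also have "max u v powr p \<le> u powr p + v powr p" by (auto simp: max_def)
  finally show ?thesis by (simp add: mult_left_mono)
qed

text \<open>The three terms cover \<open>x < 0\<close>, \<open>0 \<le> x \<le> e y\<close> (where \<open>y + x \<le> (1 + e) y\<close>) and
  \<open>x > e y\<close> (where \<open>y + x < (1 + 1/e) x\<close>).\<close>
lemma shifted_powr_mult_le:
  fixes x y q e B :: real
  assumes "0 < q" "0 < e" "0 \<le> B" "B \<le> y" "-B \<le> x"
  shows "(y + x) powr q * x \<le> - ((y - B) powr q * max 0 (-x)) + (1 + e) powr q * y powr q * max 0 x
            + (1 + 1/e) powr q * max 0 x powr (q + 1)"
proof -
  consider "x < 0" | "0 \<le> x" "x \<le> e * y" | "e * y < x"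
    by linarith
  then show ?thesis
  proof cases
    case 1
    have "(y - B) powr q \<le> (y + x) powr q" using assms by (intro powr_mono2) auto
    then have "(y + x) powr q * x \<le> (y - B) powr q * x" using 1 by (intro mult_right_mono_neg) auto
    then show ?thesis using 1 by (simp add: max_def)
  next
    case 2
    have "(y + x) powr q \<le> ((1 + e) * y) powr q"
      using assms 2 by (intro powr_mono2) (auto simp: algebra_simps)
    also have "\<dots> = (1 + e) powr q * y powr q" using assms by (simp add: powr_mult)
    finally have "(y + x) powr q * x \<le> (1 + e) powr q * y powr q * x"
      using 2 by (intro mult_right_mono) auto
    moreover have "0 \<le> (1 + 1/e) powr q * max 0 x powr (q + 1)" by simp
    ultimately show ?thesis using 2 by (simp add: max_def add_increasing2)
  next
    case 3
    have "0 \<le> e * y" using assms by simp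
    then have x: "0 < x" using 3 by linarith
    have "y + x \<le> (1 + 1/e) * x" using 3 assms by (simp add: field_simps)
    then have "(y + x) powr q \<le> ((1 + 1/e) * x) powr q" using assms x by (intro powr_mono2) auto
    also have "\<dots> = (1 + 1/e) powr q * x powr q" using assms x by (simp add: powr_mult)
    finally have "(y + x) powr q * x \<le> (1 + 1/e) powr q * (x powr q * x)"
      using x by (simp add: mult_right_mono mult.assoc)
    moreover have "x powr q * x = x powr (q + 1)" using x by (simp add: powr_add)
    moreover have "0 \<le> (1 + e) powr q * y powr q * x" using x by simp
    ultimately show ?thesis using x by (simp add: add_increasing)
  qed
qed

lemma pos_part_shift_powr_le:
  fixes x y q e B :: real
  assumes "0 < q" "0 < e" "0 \<le> B" "B \<le> y" "-B \<le> x"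
  shows "max 0 (y + x) powr (q + 1) \<le> y powr (q + 1) + (q + 1) * (- ((y - B) powr q * max 0 (-x))
           + (1 + e) powr q * y powr q * max 0 x + (1 + 1/e) powr q * max 0 x powr (q + 1))"
proof -
  have "max 0 (y + x) powr (q + 1) \<le> y powr (q + 1) + (q + 1) * (y + x) powr q * ((y + x) - y)"
    using powr_le_tangent_line[of "q + 1" y "y + x"] assms by simp
  also have "\<dots> = y powr (q + 1) + (q + 1) * ((y + x) powr q * x)" by simp
  also have "\<dots> \<le> y powr (q + 1) + (q + 1) * (- ((y - B) powr q * max 0 (-x))
           + (1 + e) powr q * y powr q * max 0 x + (1 + 1/e) powr q * max 0 x powr (q + 1))"
    using shifted_powr_mult_le[OF assms] assms(1) by (intro add_left_mono mult_left_mono) auto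
  finally show ?thesis .
qed

lemma ex_one_plus_powr_eq:
  fixes q d :: real
  assumes "0 < q" "0 < d"
  shows "\<exists>e>0. (1 + e) powr q = 1 + d"
proof (intro exI conjI)
  have "1 powr (1/q) < (1 + d) powr (1/q)" using assms by (intro powr_less_mono2) auto
  then show "0 < (1 + d) powr (1/q) - 1" by simp
  show "(1 + ((1 + d) powr (1/q) - 1)) powr q = 1 + d" using assms by (simp add: powr_powr)
qed

lemma ex_shift_powr_ge:
  fixes q d B :: real
  assumes "0 < q" "0 < d" "d < 1" "0 < B"
  shows "\<exists>Y\<ge>B. \<forall>y\<ge>Y. (1 - d) * y powr q \<le> (y - B) powr q"
proof -
  define r where "r = (1 - d) powr (1/q)"
  have "(1 - d) powr (1/q) < 1 powr (1/q)" using assms by (intro powr_less_mono2) auto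
  then have r: "0 < r" "r < 1" using assms by (auto simp: r_def)
  have rq: "r powr q = 1 - d" using assms by (simp add: r_def powr_powr)
  have "(1 - d) * y powr q \<le> (y - B) powr q" if y: "B / (1 - r) \<le> y" for y
  proof -
    have "0 < B / (1 - r)" using r assms by simp
    then have "0 < y" using y by linarith
    have "r * y \<le> y - B" using y r by (simp add: field_simps)
    then have "(r * y) powr q \<le> (y - B) powr q" using r \<open>0 < y\<close> assms by (intro powr_mono2) auto
    then show ?thesis using r \<open>0 < y\<close> by (simp add: powr_mult rq)
  qed
  moreover have "B \<le> B / (1 - r)" using r assms by (simp add: field_simps)
  ultimately show ?thesis by blast
qed

lemma one_minus_power_ge:
  fixes p :: real
  assumes "0 \<le> p" "p \<le> 1"
  shows "min (real n * p) 1 / 2 \<le> 1 - (1 - p) ^ n"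
proof (cases "n = 0")
  case False
  define p' where "p' = min p (1 / real n)"
  have p': "0 \<le> p'" "p' \<le> p" "real n * p' = min (real n * p) 1"
    using assms False by (auto simp: p'_def min_def field_simps)
  have "(1 - p') ^ n * (1 + real n * p') \<le> (1 - p') ^ n * (1 + p') ^ n"
    using assms p' by (intro mult_left_mono Bernoulli_inequality) auto
  also have "\<dots> = (1 - p' ^ 2) ^ n" by (simp add: power_mult_distrib[symmetric] algebra_simps power2_eq_square)
  also have "\<dots> \<le> 1" using assms p' by (intro power_le_one) (auto simp: power_le_one)
  finally have bernoulli: "(1 - p') ^ n * (1 + real n * p') \<le> 1" .
  have np': "0 \<le> real n * p'" "real n * p' \<le> 1" using p' by auto
  then have "(1 - p') ^ n \<le> 1 / (1 + real n * p')"
    using bernoulli by (simp add: pos_le_divide_eq add_pos_nonneg)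
  also have "\<dots> \<le> 1 - real n * p' / 2"
  proof -
    have "1 / (1 + u) \<le> 1 - u / 2" if "0 \<le> u" "u \<le> 1" for u :: real
      using that by (simp add: field_simps mult_left_le)
    then show ?thesis using np' by simp
  qed
  moreover have "(1 - p) ^ n \<le> (1 - p') ^ n" using assms p' by (intro power_mono) auto
  ultimately show ?thesis using p' by linarith
qed simp

lemma sum_ge_if_one_large:
  fixes f :: "'a \<Rightarrow> real"
  assumes "finite A" "k \<in> A" "\<And>j. j \<in> A \<Longrightarrow> -B \<le> f j" "t < f k"
  shows "t - real (card A - 1) * B \<le> sum f A"
proof -
  have "sum f A = f k + sum f (A - {k})" using assms by (simp add: sum.remove)
  moreover have "real (card (A - {k})) * (-B) \<le> sum f (A - {k})"
    using assms by (intro sum_bounded_below) auto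
  ultimately show ?thesis using assms by (simp add: algebra_simps)
qed

lemma ex_power_of_two_bracket:
  fixes t :: real
  assumes "1 < t"
  shows "\<exists>k. 2 ^ k < t \<and> t \<le> 2 ^ Suc k"
proof -
  obtain n where n: "t < 2 ^ n" using real_arch_pow[of 2 t] by auto
  define m where "m = (LEAST n. t \<le> (2::real) ^ n)"
  have m: "t \<le> 2 ^ m" unfolding m_def by (rule LeastI[of _ n]) (use n in linarith)
  then obtain k where k: "m = Suc k" using assms by (cases m) auto
  have "\<not> t \<le> 2 ^ k"
  proof
    assume "t \<le> 2 ^ k"
    then have "m \<le> k" unfolding m_def by (rule Least_le)
    then show False using k by simp
  qed
  then show ?thesis using m k by (intro exI[of _ k]) auto
qed

lemma suminf_ennreal_eq_top_if_ge_inverse: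
  fixes f :: "nat \<Rightarrow> ennreal" and \<kappa> :: real
  assumes "0 < \<kappa>" "\<And>n. n0 \<le> n \<Longrightarrow> ennreal (\<kappa> / real n) \<le> f n"
  shows "(\<Sum>n. f n) = \<infinity>"
proof -
  have "\<not> summable (\<lambda>n. if n0 \<le> n then \<kappa> / real n else 0)"
  proof
    assume "summable (\<lambda>n. if n0 \<le> n then \<kappa> / real n else 0)"
    then have "summable (\<lambda>n. \<kappa> * inverse (real (n + n0)))"
      by (subst (asm) summable_iff_shift[where k = n0, symmetric]) (simp add: field_simps)
    then have "summable (\<lambda>n. inverse (real (n + n0)))" using assms by simp
    then have "summable (\<lambda>n. inverse (real n) :: real)" by (subst (asm) summable_iff_shift)
    then show False using not_summable_harmonic by blast
  qed
  then have "(\<Sum>n. ennreal (if n0 \<le> n then \<kappa> / real n else 0)) = \<infinity>"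
    using assms(1) summable_suminf_not_top[of "\<lambda>n. if n0 \<le> n then \<kappa> / real n else 0"]
    by fastforce
  moreover have "(\<Sum>n. ennreal (if n0 \<le> n then \<kappa> / real n else 0)) \<le> (\<Sum>n. f n)"
    using assms by (intro suminf_le summableI) auto
  ultimately show ?thesis by (simp add: top_unique)
qed

text \<open>Summation by parts.\<close>
lemma weighted_sum_le_if_drift:
  fixes q v a :: "nat \<Rightarrow> ennreal" and c K :: ennreal
  assumes mono: "\<And>n. q (Suc n) \<le> q n"
    and drift: "\<And>n. v (Suc n) + c * a n \<le> v n + K"
    and v0: "v 0 = 0"
  shows "(\<Sum>n<m. q n * (c * a n)) + q m * v m \<le> K * (\<Sum>n<m. q n)"
proof (induction m)
  case (Suc m)
  have "(\<Sum>n<Suc m. q n * (c * a n)) + q (Suc m) * v (Suc m)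
      \<le> (\<Sum>n<m. q n * (c * a n)) + q m * (v (Suc m) + c * a m)"
    by (simp add: distrib_left add_ac mult_right_mono mono)
  also have "\<dots> \<le> (\<Sum>n<m. q n * (c * a n)) + q m * (v m + K)"
    by (intro add_left_mono mult_left_mono drift) simp
  also have "\<dots> = ((\<Sum>n<m. q n * (c * a n)) + q m * v m) + q m * K"
    by (simp add: distrib_left add.assoc)
  also have "\<dots> \<le> K * (\<Sum>n<m. q n) + q m * K"
    by (intro add_right_mono Suc.IH)
  finally show ?case by (simp add: distrib_left mult.commute)
qed (simp add: v0)

lemma weighted_suminf_le_if_drift:
  fixes q v a :: "nat \<Rightarrow> ennreal" and c K :: ennreal
  assumes "\<And>n. q (Suc n) \<le> q n" "\<And>n. v (Suc n) + c * a n \<le> v n + K" "v 0 = 0"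
  shows "c * (\<Sum>n. q n * a n) \<le> K * (\<Sum>n. q n)"
proof -
  have "(\<Sum>n<m. q n * (c * a n)) \<le> K * (\<Sum>n. q n)" for m
  proof -
    have "(\<Sum>n<m. q n * (c * a n)) \<le> (\<Sum>n<m. q n * (c * a n)) + q m * v m" by simp
    also have "\<dots> \<le> K * (\<Sum>n<m. q n)" by (rule weighted_sum_le_if_drift[where q = q and v = v and a = a, OF assms])
    also have "\<dots> \<le> K * (\<Sum>n. q n)" by (intro mult_left_mono sum_le_suminf) auto
    finally show ?thesis .
  qed
  then have "(\<Sum>n. q n * (c * a n)) \<le> K * (\<Sum>n. q n)"
    unfolding suminf_eq_SUP by (intro SUP_least)
  then show ?thesis by (simp add: mult.left_commute)
qed

section \<open>Moments from tail bounds\<close>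

lemma eventually_le_powr_imp_le_powr_ge_one:
  fixes f :: "real \<Rightarrow> real"
  assumes "0 < \<alpha>" "\<And>x. f x \<le> 1" "eventually (\<lambda>x. f x \<le> D * x powr (-\<alpha>)) at_top"
  shows "\<exists>D'>0. \<forall>x\<ge>1. f x \<le> D' * x powr (-\<alpha>)"
proof -
  obtain x0 where x0: "\<And>x. x0 \<le> x \<Longrightarrow> f x \<le> D * x powr (-\<alpha>)"
    using assms(3) by (auto simp: eventually_at_top_linorder)
  define D' where "D' = max (max D 1) (x0 powr \<alpha>)"
  have "f x \<le> D' * x powr (-\<alpha>)" if x: "1 \<le> x" for x
  proof (cases "x0 \<le> x")
    case True
    then have "f x \<le> D * x powr (-\<alpha>)" by (rule x0)
    also have "\<dots> \<le> D' * x powr (-\<alpha>)" by (intro mult_right_mono) (auto simp: D'_def)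
    finally show ?thesis .
  next
    case False
    have "x powr \<alpha> \<le> x0 powr \<alpha>" using False x assms(1) by (intro powr_mono2) auto
    then have "1 \<le> x0 powr \<alpha> * x powr (-\<alpha>)" using x by (simp add: powr_minus field_simps)
    also have "\<dots> \<le> D' * x powr (-\<alpha>)" by (intro mult_right_mono) (auto simp: D'_def)
    finally show ?thesis using assms(2) order_trans by blast
  qed
  moreover have "0 < D'" by (simp add: D'_def)
  ultimately show ?thesis by blast
qed

lemma pos_part_powr_le_dyadic_sum:
  fixes t p :: real
  assumes "0 < p"
  shows "ennreal (max 0 t powr p) \<le> 1 + (\<Sum>k. ennreal (2 powr (real (Suc k) * p)) * indicator {2 ^ k<..} t)"
proof (cases "1 < t")
  case False
  then have "max 0 t powr p \<le> 1 powr p" using assms by (intro powr_mono2) auto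
  then show ?thesis by (simp add: add_increasing2)
next
  case True
  obtain k where k: "2 ^ k < t" "t \<le> 2 ^ Suc k"
    using ex_power_of_two_bracket[OF True] by auto
  have "max 0 t powr p \<le> (2 ^ Suc k) powr p" using True k assms by (intro powr_mono2) auto
  also have "(2::real) ^ Suc k = 2 powr real (Suc k)" by (rule powr_realpow[symmetric]) simp
  also have "(2 powr real (Suc k)) powr p = 2 powr (real (Suc k) * p)" by (simp add: powr_powr)
  finally have "ennreal (max 0 t powr p) \<le> ennreal (2 powr (real (Suc k) * p)) * indicator {2 ^ k<..} t"
    using k by (simp add: ennreal_leI)
  also have "\<dots> \<le> (\<Sum>k. ennreal (2 powr (real (Suc k) * p)) * indicator {2 ^ k<..} t)"
    using sum_le_suminf[OF summableI, of "{k}" "\<lambda>k. ennreal (2 powr (real (Suc k) * p)) * indicator {2 ^ k<..} t"]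
    by (simp only: sum.insert_remove finite.emptyI empty_iff sum.empty) simp
  finally show ?thesis by (simp add: add_increasing)
qed

text \<open>By the dyadic decomposition the tail bound makes \<open>E(X\<^sup>+)\<^sup>p\<close> a geometric series with ratio
  \<open>2\<^sup>p\<^sup>-\<^sup>\<alpha>\<close>.\<close>
lemma (in prob_space) integrable_pos_part_powr_if_tail:
  fixes X :: "'a \<Rightarrow> real"
  assumes X[measurable]: "X \<in> borel_measurable M" and p: "0 < p" "p < \<alpha>"
    and tail: "eventually (\<lambda>x. prob {\<omega>\<in>space M. x < X \<omega>} \<le> D * x powr (-\<alpha>)) at_top"
  shows "integrable M (\<lambda>\<omega>. max 0 (X \<omega>) powr p)"
proof (rule integrableI_nonneg)
  obtain D' where D': "0 < D'" "\<And>x. 1 \<le> x \<Longrightarrow> prob {\<omega>\<in>space M. x < X \<omega>} \<le> D' * x powr (-\<alpha>)"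
    using eventually_le_powr_imp_le_powr_ge_one[OF _ _ tail] p by auto
  define E where "E k = {\<omega>\<in>space M. 2 ^ k < X \<omega>}" for k :: nat
  have E[measurable]: "E k \<in> sets M" for k unfolding E_def by measurable
  define c where "c k = ennreal (2 powr (real (Suc k) * p))" for k :: nat
  have dyadic: "ennreal (max 0 (X \<omega>) powr p) \<le> 1 + (\<Sum>k. c k * indicator (E k) \<omega>)"
    if "\<omega> \<in> space M" for \<omega>
    using pos_part_powr_le_dyadic_sum[OF p(1), of "X \<omega>"] that
    by (simp add: c_def E_def indicator_def)
  have term_le: "c k * emeasure M (E k) \<le> ennreal (D' * 2 powr p * (2 powr (p - \<alpha>)) ^ k)" for k
  proof -
    have "prob (E k) \<le> D' * (2 ^ k) powr (-\<alpha>)" unfolding E_def by (intro D') simp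
    also have "(2 ^ k) powr (-\<alpha>) = 2 powr (- real k * \<alpha>)"
      by (simp add: powr_realpow[symmetric] powr_powr)
    finally have "2 powr (real (Suc k) * p) * prob (E k) \<le> 2 powr (real (Suc k) * p) * (D' * 2 powr (- real k * \<alpha>))"
      by (intro mult_left_mono) auto
    also have "\<dots> = D' * 2 powr p * (2 powr (p - \<alpha>)) ^ k"
      by (simp add: powr_realpow[symmetric] powr_powr powr_add[symmetric] algebra_simps)
    finally show ?thesis
      unfolding c_def emeasure_eq_measure by (simp add: ennreal_mult[symmetric] ennreal_leI)
  qed
  have geometric: "summable (\<lambda>k. D' * 2 powr p * (2 powr (p - \<alpha>)) ^ k)"
  proof (intro summable_mult summable_geometric)
    have "2 powr (p - \<alpha>) < 2 powr 0" using p by (intro powr_less_mono) auto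
    then show "norm (2 powr (p - \<alpha>)) < 1" by simp
  qed
  have "(\<integral>\<^sup>+\<omega>. ennreal (max 0 (X \<omega>) powr p) \<partial>M) \<le> (\<integral>\<^sup>+\<omega>. 1 + (\<Sum>k. c k * indicator (E k) \<omega>) \<partial>M)"
    by (intro nn_integral_mono dyadic)
  also have "\<dots> = 1 + (\<Sum>k. c k * emeasure M (E k))"
    by (simp add: nn_integral_add nn_integral_suminf nn_integral_cmult_indicator emeasure_space_1)
  also have "\<dots> \<le> 1 + (\<Sum>k. ennreal (D' * 2 powr p * (2 powr (p - \<alpha>)) ^ k))"
    by (intro add_left_mono suminf_le summableI term_le)
  also have "\<dots> = 1 + ennreal (\<Sum>k. D' * 2 powr p * (2 powr (p - \<alpha>)) ^ k)"
    using geometric D' by (subst suminf_ennreal2) auto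
  also have "\<dots> < \<infinity>" by (simp add: ennreal_add_eq_top less_top[symmetric])
  finally show "(\<integral>\<^sup>+\<omega>. ennreal (max 0 (X \<omega>) powr p) \<partial>M) < \<infinity>" .
qed auto

lemma (in prob_space) nn_integral_indep_var:
  fixes Y Z :: "'a \<Rightarrow> real" and f :: "real \<Rightarrow> real \<Rightarrow> ennreal"
  assumes ind: "indep_var borel Y borel Z"
    and f[measurable]: "case_prod f \<in> borel_measurable (borel \<Otimes>\<^sub>M borel)"
  shows "(\<integral>\<^sup>+\<omega>. f (Y \<omega>) (Z \<omega>) \<partial>M) = (\<integral>\<^sup>+\<omega>. (\<integral>\<^sup>+z. f (Y \<omega>) z \<partial>distr M borel Z) \<partial>M)"
proof -
  have [measurable]: "Y \<in> borel_measurable M" "Z \<in> borel_measurable M"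
    using indep_var_rv1[OF ind] indep_var_rv2[OF ind] by auto
  interpret pY: prob_space "distr M borel Y" by (rule prob_space_distr) simp
  interpret pZ: prob_space "distr M borel Z" by (rule prob_space_distr) simp
  interpret pair_sigma_finite "distr M borel Y" "distr M borel Z" ..
  have "(\<integral>\<^sup>+\<omega>. f (Y \<omega>) (Z \<omega>) \<partial>M) = (\<integral>\<^sup>+w. case_prod f w \<partial>distr M (borel \<Otimes>\<^sub>M borel) (\<lambda>x. (Y x, Z x)))"
    by (subst nn_integral_distr) auto
  also have "\<dots> = (\<integral>\<^sup>+w. case_prod f w \<partial>(distr M borel Y \<Otimes>\<^sub>M distr M borel Z))"
    using ind by (simp add: indep_var_distribution_eq)
  also have "\<dots> = (\<integral>\<^sup>+y. (\<integral>\<^sup>+z. f y z \<partial>distr M borel Z) \<partial>distr M borel Y)"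
    by (subst pZ.nn_integral_fst[symmetric])
       (auto simp: measurable_cong_sets[OF sets_pair_measure_cong[OF sets_distr sets_distr] refl])
  also have "\<dots> = (\<integral>\<^sup>+\<omega>. (\<integral>\<^sup>+z. f (Y \<omega>) z \<partial>distr M borel Z) \<partial>M)"
  proof (subst nn_integral_distr)
    show "(\<lambda>y. \<integral>\<^sup>+ z. f y z \<partial>distr M borel Z) \<in> borel_measurable (distr M borel Y)"
      by (subst measurable_cong_sets[OF sets_distr refl])
         (rule pZ.borel_measurable_nn_integral,
          simp add: measurable_cong_sets[OF sets_pair_measure_cong[OF refl sets_distr] refl])
  qed auto
  finally show ?thesis .
qed

section \<open>A Lyapunov function for walks with negative drift\<close>

locale negative_drift = prob_space P for P :: "real measure" +
  fixes B :: real
  assumes sets_P [measurable_cong]: "sets P = sets borel"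
    and B_pos: "0 < B"
    and integrable_id: "integrable P (\<lambda>x. x)"
    and mean_neg: "(\<integral>x. x \<partial>P) < 0"
    and bounded_below: "AE x in P. -B \<le> x"
begin

definition pos_part_mean :: real where
  "pos_part_mean = (\<integral>x. max 0 x \<partial>P)"

definition neg_part_mean :: real where
  "neg_part_mean = (\<integral>x. max 0 (-x) \<partial>P)"

lemma integrable_pos_part: "integrable P (\<lambda>x. max 0 x)"
  and integrable_neg_part: "integrable P (\<lambda>x. max 0 (-x))"
  using integrable_id by auto

lemma pos_part_mean_nonneg: "0 \<le> pos_part_mean"
  by (simp add: pos_part_mean_def)

lemma pos_part_mean_less: "pos_part_mean < neg_part_mean"
proof -
  have "(\<integral>x. x \<partial>P) = (\<integral>x. max 0 x - max 0 (-x) \<partial>P)"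
    by (intro Bochner_Integration.integral_cong) (auto simp: max_def)
  also have "\<dots> = pos_part_mean - neg_part_mean"
    using integrable_pos_part integrable_neg_part by (simp add: pos_part_mean_def neg_part_mean_def)
  finally show ?thesis using mean_neg by simp
qed

lemma integrable_shifted_pos_part_powr:
  assumes p: "0 < p" and mom: "integrable P (\<lambda>x. max 0 x powr p)"
  shows "integrable P (\<lambda>x. max 0 (y + x) powr p)"
proof (rule Bochner_Integration.integrable_bound)
  show "integrable P (\<lambda>x. 2 powr p * (\<bar>y\<bar> powr p + max 0 x powr p))"
    using mom by auto
  have "max 0 (y + x) powr p \<le> 2 powr p * (\<bar>y\<bar> powr p + max 0 x powr p)" for x
  proof -
    have "max 0 (y + x) powr p \<le> (\<bar>y\<bar> + max 0 x) powr p" using p by (intro powr_mono2) auto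
    also have "\<dots> \<le> 2 powr p * (\<bar>y\<bar> powr p + max 0 x powr p)"
      using p by (intro powr_add_le_two_powr) auto
    finally show ?thesis .
  qed
  then show "AE x in P. norm (max 0 (y + x) powr p) \<le> norm (2 powr p * (\<bar>y\<bar> powr p + max 0 x powr p))"
    by simp
qed simp

lemma integral_shifted_pos_part_powr_le:
  assumes q: "0 < q" and e: "0 < e" and y: "B \<le> y"
    and mom: "integrable P (\<lambda>x. max 0 x powr (q + 1))"
  shows "(\<integral>x. max 0 (y + x) powr (q + 1) \<partial>P) \<le> y powr (q + 1) + (q + 1) * (- ((y - B) powr q * neg_part_mean)
           + (1 + e) powr q * y powr q * pos_part_mean + (1 + 1/e) powr q * (\<integral>x. max 0 x powr (q + 1) \<partial>P))"
proof -
  define f where "f x = y powr (q + 1) + (q + 1) * (- ((y - B) powr q * max 0 (-x))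
    + (1 + e) powr q * y powr q * max 0 x + (1 + 1/e) powr q * max 0 x powr (q + 1))" for x
  have int_f: "integrable P f"
    unfolding f_def using integrable_pos_part integrable_neg_part mom by auto
  have "(\<integral>x. max 0 (y + x) powr (q + 1) \<partial>P) \<le> (\<integral>x. f x \<partial>P)"
  proof (intro integral_mono_AE integrable_shifted_pos_part_powr int_f mom)
    show "AE x in P. max 0 (y + x) powr (q + 1) \<le> f x"
      using bounded_below unfolding f_def
      by eventually_elim (use pos_part_shift_powr_le[OF q e _ y] B_pos in auto)
  qed (use q in auto)
  also have "(\<integral>x. f x \<partial>P) = y powr (q + 1) + (q + 1) * (- ((y - B) powr q * neg_part_mean)
      + (1 + e) powr q * y powr q * pos_part_mean + (1 + 1/e) powr q * (\<integral>x. max 0 x powr (q + 1) \<partial>P))"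
    unfolding f_def pos_part_mean_def neg_part_mean_def
    using integrable_pos_part integrable_neg_part mom by (simp add: prob_space)
  finally show ?thesis .
qed

text \<open>For large \<open>y\<close>, \<open>E((y + X)\<^sup>+)\<^sup>p \<approx> y\<^sup>p + p y\<^sup>p\<^sup>-\<^sup>1 E X\<close>. The tolerances \<open>e\<close> and \<open>Y\<close> are chosen
  to lose at most a quarter of the drift \<open>\<mu> = E X\<^sup>- - E X\<^sup>+\<close> on each side of the split of
  \<open>shifted_powr_mult_le\<close>.\<close>
lemma drift_for_large_argument:
  assumes p: "1 < p" and mom: "integrable P (\<lambda>x. max 0 x powr p)"
  obtains c Y K where "0 < c" "B \<le> Y"
    "\<And>y. Y \<le> y \<Longrightarrow> (\<integral>x. max 0 (y + x) powr p \<partial>P) + c * y powr (p - 1) \<le> y powr p + K"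
proof -
  define q where "q = p - 1"
  have q: "0 < q" and p_eq: "p = q + 1" using p by (auto simp: q_def)
  define a where "a = pos_part_mean"
  define b where "b = neg_part_mean"
  define \<mu> where "\<mu> = b - a"
  have a: "0 \<le> a" using pos_part_mean_nonneg by (simp add: a_def)
  have \<mu>: "0 < \<mu>" "\<mu> \<le> b" using pos_part_mean_less a by (auto simp: \<mu>_def a_def b_def)
  obtain e where e: "0 < e" and e_eq: "(1 + e) powr q = 1 + \<mu> / (4 * (a + 1))"
    using ex_one_plus_powr_eq[OF q, of "\<mu> / (4 * (a + 1))"] \<mu> a by auto
  have "a * (\<mu> / (4 * (a + 1))) \<le> \<mu> / 4" using \<mu> a by (simp add: field_simps)
  then have ea: "(1 + e) powr q * a \<le> a + \<mu> / 4" by (simp add: e_eq algebra_simps)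
  obtain Y where Y: "B \<le> Y" and shift: "\<And>y. Y \<le> y \<Longrightarrow> (1 - \<mu> / (4 * b)) * y powr q \<le> (y - B) powr q"
    using ex_shift_powr_ge[OF q, of "\<mu> / (4 * b)" B] \<mu> B_pos by (auto simp: field_simps)
  define K where "K = p * ((1 + 1/e) powr q * (\<integral>x. max 0 x powr p \<partial>P))"
  have "(\<integral>x. max 0 (y + x) powr p \<partial>P) + (p * \<mu> / 2) * y powr q \<le> y powr p + K"
    if y: "Y \<le> y" for y
  proof -
    have "(1 - \<mu> / (4 * b)) * y powr q * b \<le> (y - B) powr q * b"
      using shift[OF y] \<mu> by (intro mult_right_mono) auto
    moreover have "(1 - \<mu> / (4 * b)) * y powr q * b = b * y powr q - \<mu> / 4 * y powr q"
      using \<mu> by (simp add: algebra_simps)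
    moreover have "(1 + e) powr q * y powr q * a \<le> a * y powr q + \<mu> / 4 * y powr q"
      using mult_left_mono[OF ea, of "y powr q"] by (simp add: algebra_simps)
    moreover have "b * y powr q = a * y powr q + \<mu> * y powr q" by (simp add: \<mu>_def algebra_simps)
    ultimately have "- ((y - B) powr q * b) + (1 + e) powr q * y powr q * a \<le> - (\<mu> / 2 * y powr q)"
      by linarith
    then have "p * (- ((y - B) powr q * b) + (1 + e) powr q * y powr q * a) \<le> p * (- (\<mu> / 2 * y powr q))"
      using p by (intro mult_left_mono) auto
    moreover have "(\<integral>x. max 0 (y + x) powr p \<partial>P) \<le> y powr p + p * (- ((y - B) powr q * b)
        + (1 + e) powr q * y powr q * a + (1 + 1/e) powr q * (\<integral>x. max 0 x powr p \<partial>P))"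
      using integral_shifted_pos_part_powr_le[OF q e] Y y mom by (simp add: p_eq a_def b_def)
    ultimately show ?thesis by (simp add: K_def algebra_simps)
  qed
  then show thesis
    by (intro that[of "p * \<mu> / 2" Y K]) (use p \<mu> Y in \<open>auto simp: q_def\<close>)
qed

theorem drift:
  assumes p: "1 < p" and mom: "integrable P (\<lambda>x. max 0 x powr p)"
  obtains c K where "0 < c"
    "\<And>y. (\<integral>x. max 0 (y + x) powr p \<partial>P) + c * max 0 y powr (p - 1) \<le> max 0 y powr p + K"
proof -
  obtain c Y K where c: "0 < c" and Y: "B \<le> Y"
    and large: "\<And>y. Y \<le> y \<Longrightarrow> (\<integral>x. max 0 (y + x) powr p \<partial>P) + c * y powr (p - 1) \<le> y powr p + K"
    using drift_for_large_argument[OF p mom] by blast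
  define K' where "K' = max K (2 powr p * (Y powr p + (\<integral>x. max 0 x powr p \<partial>P)) + c * Y powr (p - 1))"
  have "(\<integral>x. max 0 (y + x) powr p \<partial>P) + c * max 0 y powr (p - 1) \<le> max 0 y powr p + K'" for y
  proof (cases "Y \<le> y")
    case True
    then show ?thesis using large[OF True] Y B_pos by (simp add: K'_def max_def)
  next
    case False
    have "(\<integral>x. max 0 (y + x) powr p \<partial>P) \<le> (\<integral>x. 2 powr p * (Y powr p + max 0 x powr p) \<partial>P)"
    proof (intro integral_mono integrable_shifted_pos_part_powr mom)
      fix x
      have "max 0 (y + x) powr p \<le> (Y + max 0 x) powr p" using p False Y B_pos by (intro powr_mono2) auto
      also have "\<dots> \<le> 2 powr p * (Y powr p + max 0 x powr p)"
        using p Y B_pos by (intro powr_add_le_two_powr) auto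
      finally show "max 0 (y + x) powr p \<le> 2 powr p * (Y powr p + max 0 x powr p)" .
    qed (use p mom in auto)
    also have "\<dots> = 2 powr p * (Y powr p + (\<integral>x. max 0 x powr p \<partial>P))"
      using mom by (simp add: prob_space)
    finally have "(\<integral>x. max 0 (y + x) powr p \<partial>P) \<le> 2 powr p * (Y powr p + (\<integral>x. max 0 x powr p \<partial>P))" .
    moreover have "c * max 0 y powr (p - 1) \<le> c * Y powr (p - 1)"
      using False c p Y B_pos by (intro mult_left_mono powr_mono2) auto
    moreover have "0 \<le> max 0 y powr p" by simp
    ultimately show ?thesis unfolding K'_def by linarith
  qed
  then show thesis using that c by blast
qed

end

section \<open>Random sums of i.i.d. steps\<close>

locale iid_random_sum = prob_space M for M :: "'a measure" +
  fixes X :: "nat \<Rightarrow> 'a \<Rightarrow> real" and N :: "'a \<Rightarrow> nat"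
  assumes indep: "indep_vars (\<lambda>_. borel) (\<lambda>i. if i = 0 then (\<lambda>\<omega>. real (N \<omega>)) else X i) UNIV"
    and ident: "\<And>i. 1 \<le> i \<Longrightarrow> distr M borel (X i) = distr M borel (X 1)"
begin

definition vars :: "nat \<Rightarrow> 'a \<Rightarrow> real" where
  "vars i = (if i = 0 then (\<lambda>\<omega>. real (N \<omega>)) else X i)"

definition S :: "nat \<Rightarrow> 'a \<Rightarrow> real" where
  "S n \<omega> = (\<Sum>k = 1..n. X k \<omega>)"

definition step_law :: "real measure" where
  "step_law = distr M borel (X 1)"

lemma indep_vars: "indep_vars (\<lambda>_. borel) vars UNIV"
  using indep unfolding vars_def[abs_def] .

lemma measurable_X [measurable]: "1 \<le> i \<Longrightarrow> X i \<in> borel_measurable M"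
  using indep_vars unfolding indep_vars_def by (auto simp: vars_def dest!: bspec[of _ _ i] split: if_splits)

lemma measurable_N [measurable]: "(\<lambda>\<omega>. real (N \<omega>)) \<in> borel_measurable M"
proof -
  have "random_variable borel (vars 0)" using indep_vars unfolding indep_vars_def by auto
  then show ?thesis by (simp add: vars_def)
qed

lemma measurable_S [measurable]: "S n \<in> borel_measurable M"
  unfolding S_def[abs_def] by measurable

lemma sets_N_eq [measurable]: "{\<omega> \<in> space M. N \<omega> = k} \<in> sets M"
proof -
  have "{\<omega> \<in> space M. N \<omega> = k} = {\<omega> \<in> space M. real (N \<omega>) = real k}" by auto
  also have "\<dots> \<in> sets M" by measurable
  finally show ?thesis .
qed

lemma S_0 [simp]: "S 0 \<omega> = 0"
  by (simp add: S_def)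

lemma S_Suc: "S (Suc n) \<omega> = S n \<omega> + X (Suc n) \<omega>"
  by (simp add: S_def)

lemma prob_space_step_law: "prob_space step_law"
  unfolding step_law_def by (rule prob_space_distr) simp

lemma sets_step_law [simp, measurable_cong]: "sets step_law = sets borel"
  by (simp add: step_law_def)

lemma AE_ge_all:
  assumes "AE \<omega> in M. c \<le> X 1 \<omega>"
  shows "AE \<omega> in M. \<forall>j\<ge>1. c \<le> X j \<omega>"
proof -
  have "AE \<omega> in M. c \<le> X j \<omega>" if j: "1 \<le> j" for j
  proof -
    have "AE x in distr M borel (X j). c \<le> x"
      unfolding ident[OF j] using assms by (subst AE_distr_iff) auto
    then show ?thesis using j by (subst (asm) AE_distr_iff) auto
  qed
  then show ?thesis by (auto simp: AE_all_countable)
qed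

lemma indep_S_X: "indep_var borel (S n) borel (X (Suc n))"
proof -
  have "indep_var (PiM {1..n} (\<lambda>_. borel)) (\<lambda>\<omega>. restrict (\<lambda>i. vars i \<omega>) {1..n})
           (PiM {Suc n} (\<lambda>_. borel)) (\<lambda>\<omega>. restrict (\<lambda>i. vars i \<omega>) {Suc n})"
    by (rule indep_var_restrict[OF indep_vars]) auto
  then have "indep_var borel ((\<lambda>f. \<Sum>k\<in>{1..n}. f k) \<circ> (\<lambda>\<omega>. restrict (\<lambda>i. vars i \<omega>) {1..n}))
           borel ((\<lambda>f. f (Suc n)) \<circ> (\<lambda>\<omega>. restrict (\<lambda>i. vars i \<omega>) {Suc n}))"
    by (rule indep_var_compose[OF _ _ measurable_component_singleton], (measurable)[1], simp)
  also have "(\<lambda>f. \<Sum>k\<in>{1..n}. f k) \<circ> (\<lambda>\<omega>. restrict (\<lambda>i. vars i \<omega>) {1..n}) = S n"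
    by (auto simp: S_def vars_def fun_eq_iff intro!: sum.cong)
  also have "(\<lambda>f. f (Suc n)) \<circ> (\<lambda>\<omega>. restrict (\<lambda>i. vars i \<omega>) {Suc n}) = X (Suc n)"
    by (auto simp: vars_def fun_eq_iff)
  finally show ?thesis .
qed

lemma indep_N_S: "indep_var borel (\<lambda>\<omega>. real (N \<omega>)) borel (S n)"
proof -
  have "indep_var (PiM {0} (\<lambda>_. borel)) (\<lambda>\<omega>. restrict (\<lambda>i. vars i \<omega>) {0})
           (PiM {1..n} (\<lambda>_. borel)) (\<lambda>\<omega>. restrict (\<lambda>i. vars i \<omega>) {1..n})"
    by (rule indep_var_restrict[OF indep_vars]) auto
  then have "indep_var borel ((\<lambda>f. f 0) \<circ> (\<lambda>\<omega>. restrict (\<lambda>i. vars i \<omega>) {0}))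
           borel ((\<lambda>f. \<Sum>k\<in>{1..n}. f k) \<circ> (\<lambda>\<omega>. restrict (\<lambda>i. vars i \<omega>) {1..n}))"
    by (rule indep_var_compose) (rule measurable_component_singleton, simp, measurable)
  also have "(\<lambda>f. \<Sum>k\<in>{1..n}. f k) \<circ> (\<lambda>\<omega>. restrict (\<lambda>i. vars i \<omega>) {1..n}) = S n"
    by (auto simp: S_def vars_def fun_eq_iff intro!: sum.cong)
  also have "(\<lambda>f. f 0) \<circ> (\<lambda>\<omega>. restrict (\<lambda>i. vars i \<omega>) {0}) = (\<lambda>\<omega>. real (N \<omega>))"
    by (auto simp: vars_def fun_eq_iff)
  finally show ?thesis .
qed

lemma nn_integral_S_Suc:
  fixes G :: "real \<Rightarrow> ennreal"
  assumes [measurable]: "G \<in> borel_measurable borel"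
  shows "(\<integral>\<^sup>+\<omega>. G (S (Suc n) \<omega>) \<partial>M) = (\<integral>\<^sup>+\<omega>. (\<integral>\<^sup>+x. G (S n \<omega> + x) \<partial>step_law) \<partial>M)"
proof -
  have "(\<integral>\<^sup>+\<omega>. G (S (Suc n) \<omega>) \<partial>M) = (\<integral>\<^sup>+\<omega>. G (S n \<omega> + X (Suc n) \<omega>) \<partial>M)"
    by (simp add: S_Suc)
  also have "\<dots> = (\<integral>\<^sup>+\<omega>. (\<integral>\<^sup>+x. G (S n \<omega> + x) \<partial>distr M borel (X (Suc n))) \<partial>M)"
    by (rule nn_integral_indep_var[OF indep_S_X, where f = "\<lambda>y x. G (y + x)"]) simp
  also have "distr M borel (X (Suc n)) = step_law"
    unfolding step_law_def by (rule ident) simp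
  finally show ?thesis .
qed

lemma nn_integral_random_sum:
  fixes G :: "real \<Rightarrow> ennreal"
  assumes [measurable]: "G \<in> borel_measurable borel"
  shows "(\<integral>\<^sup>+\<omega>. G (S (N \<omega>) \<omega>) \<partial>M) =
         (\<Sum>n. emeasure M {\<omega>\<in>space M. N \<omega> = n} * (\<integral>\<^sup>+\<omega>. G (S n \<omega>) \<partial>M))"
proof -
  have "G (S (N \<omega>) \<omega>) = (\<Sum>n. indicator {\<omega>\<in>space M. N \<omega> = n} \<omega> * G (S n \<omega>))"
    if "\<omega> \<in> space M" for \<omega>
  proof -
    have "(\<lambda>n. indicator {\<omega>\<in>space M. N \<omega> = n} \<omega> * G (S n \<omega>)) = (\<lambda>n. if n = N \<omega> then G (S n \<omega>) else 0)"
      using that by (auto simp: fun_eq_iff indicator_def)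
    then show ?thesis using sums_single[of "N \<omega>" "\<lambda>n. G (S n \<omega>)"] by (simp add: sums_iff)
  qed
  then have "(\<integral>\<^sup>+\<omega>. G (S (N \<omega>) \<omega>) \<partial>M) =
      (\<integral>\<^sup>+\<omega>. (\<Sum>n. indicator {\<omega>\<in>space M. N \<omega> = n} \<omega> * G (S n \<omega>)) \<partial>M)"
    by (intro nn_integral_cong) simp
  also have "\<dots> = (\<Sum>n. \<integral>\<^sup>+\<omega>. indicator {\<omega>\<in>space M. N \<omega> = n} \<omega> * G (S n \<omega>) \<partial>M)"
    by (intro nn_integral_suminf) measurable
  also have "\<dots> = (\<Sum>n. emeasure M {\<omega>\<in>space M. N \<omega> = n} * (\<integral>\<^sup>+\<omega>. G (S n \<omega>) \<partial>M))"
  proof (intro suminf_cong)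
    fix n
    have "(\<integral>\<^sup>+\<omega>. indicator {\<omega>\<in>space M. N \<omega> = n} \<omega> * G (S n \<omega>) \<partial>M)
        = (\<integral>\<^sup>+\<omega>. indicator {real n} (real (N \<omega>)) * G (S n \<omega>) \<partial>M)"
      by (intro nn_integral_cong) (auto simp: indicator_def)
    also have "\<dots> = (\<integral>\<^sup>+\<omega>. (\<integral>\<^sup>+z. indicator {real n} (real (N \<omega>)) * G z \<partial>distr M borel (S n)) \<partial>M)"
      by (rule nn_integral_indep_var[OF indep_N_S, where f = "\<lambda>y z. indicator {real n} y * G z"]) measurable
    also have "\<dots> = (\<integral>\<^sup>+\<omega>. indicator {real n} (real (N \<omega>)) * (\<integral>\<^sup>+\<omega>. G (S n \<omega>) \<partial>M) \<partial>M)"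
      by (intro nn_integral_cong) (simp add: nn_integral_cmult nn_integral_distr)
    also have "\<dots> = (\<integral>\<^sup>+\<omega>. indicator {real n} (real (N \<omega>)) \<partial>M) * (\<integral>\<^sup>+\<omega>. G (S n \<omega>) \<partial>M)"
      by (rule nn_integral_multc) measurable
    also have "(\<integral>\<^sup>+\<omega>. indicator {real n} (real (N \<omega>)) \<partial>M) = (\<integral>\<^sup>+\<omega>. indicator {\<omega>\<in>space M. N \<omega> = n} \<omega> \<partial>M)"
      by (intro nn_integral_cong) (auto simp: indicator_def)
    finally show "(\<integral>\<^sup>+\<omega>. indicator {\<omega>\<in>space M. N \<omega> = n} \<omega> * G (S n \<omega>) \<partial>M) =
        emeasure M {\<omega>\<in>space M. N \<omega> = n} * (\<integral>\<^sup>+\<omega>. G (S n \<omega>) \<partial>M)"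
      by simp
  qed
  finally show ?thesis .
qed

lemma prob_exists_X_gt:
  assumes n: "1 \<le> n"
  shows "prob {\<omega>\<in>space M. \<exists>k\<in>{1..n}. t < X k \<omega>} = 1 - (1 - prob {\<omega>\<in>space M. t < X 1 \<omega>}) ^ n"
proof -
  have le_t: "prob {\<omega>\<in>space M. X k \<omega> \<le> t} = 1 - prob {\<omega>\<in>space M. t < X 1 \<omega>}" if k: "1 \<le> k" for k
  proof -
    have "prob {\<omega>\<in>space M. X k \<omega> \<le> t} = measure (distr M borel (X k)) {..t}"
      using k by (subst measure_distr) (auto intro!: arg_cong[where f = prob])
    also have "\<dots> = prob {\<omega>\<in>space M. X 1 \<omega> \<le> t}"
      unfolding ident[OF k] by (subst measure_distr) (auto intro!: arg_cong[where f = prob])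
    also have "{\<omega>\<in>space M. X 1 \<omega> \<le> t} = space M - {\<omega>\<in>space M. t < X 1 \<omega>}" by auto
    finally show ?thesis by (simp add: prob_compl)
  qed
  have vars_le: "vars k -` {..t} \<inter> space M = {\<omega>\<in>space M. X k \<omega> \<le> t}" if "k \<in> {1..n}" for k
    using that by (auto simp: vars_def)
  have "prob (\<Inter>k\<in>{1..n}. {\<omega>\<in>space M. X k \<omega> \<le> t}) = prob (\<Inter>k\<in>{1..n}. vars k -` {..t} \<inter> space M)"
    by (intro arg_cong[where f = prob] INF_cong) (simp_all add: vars_le)
  also have "\<dots> = (\<Prod>k\<in>{1..n}. prob (vars k -` {..t} \<inter> space M))"
    by (rule indep_varsD[OF indep_vars]) (use n in auto)
  also have "\<dots> = (\<Prod>k\<in>{1..n}. 1 - prob {\<omega>\<in>space M. t < X 1 \<omega>})"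
    by (intro prod.cong) (auto simp: vars_le le_t)
  finally have "prob (\<Inter>k\<in>{1..n}. {\<omega>\<in>space M. X k \<omega> \<le> t}) = (1 - prob {\<omega>\<in>space M. t < X 1 \<omega>}) ^ n"
    by simp
  moreover have "{\<omega>\<in>space M. \<exists>k\<in>{1..n}. t < X k \<omega>} = space M - (\<Inter>k\<in>{1..n}. {\<omega>\<in>space M. X k \<omega> \<le> t})"
    using n by (auto simp: not_less) (meson atLeastAtMost_iff not_le)
  moreover have "(\<Inter>k\<in>{1..n}. {\<omega>\<in>space M. X k \<omega> \<le> t}) \<in> events"
    using n by (intro sets.finite_INT) auto
  ultimately show ?thesis by (simp add: prob_compl)
qed

lemma partial_sum_drift:
  fixes V W :: "real \<Rightarrow> real" and c K :: real
  assumes [measurable]: "V \<in> borel_measurable borel" "W \<in> borel_measurable borel"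
    and nonneg: "\<And>y. 0 \<le> V y" "\<And>y. 0 \<le> W y" "0 \<le> c" "0 \<le> K"
    and integrable: "\<And>y. integrable step_law (\<lambda>x. V (y + x))"
    and drift: "\<And>y. (\<integral>x. V (y + x) \<partial>step_law) + c * W y \<le> V y + K"
  shows "(\<integral>\<^sup>+\<omega>. V (S (Suc n) \<omega>) \<partial>M) + c * (\<integral>\<^sup>+\<omega>. W (S n \<omega>) \<partial>M) \<le> (\<integral>\<^sup>+\<omega>. V (S n \<omega>) \<partial>M) + K"
proof -
  interpret step: prob_space step_law by (rule prob_space_step_law)
  define g where "g y = (\<integral>\<^sup>+x. ennreal (V (y + x)) \<partial>step_law)" for y
  have [measurable]: "g \<in> borel_measurable borel"
    unfolding g_def by (rule step.borel_measurable_nn_integral)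
      (simp add: measurable_cong_sets[OF sets_pair_measure_cong[OF refl sets_step_law] refl])
  have pointwise: "g y + c * ennreal (W y) \<le> ennreal (V y) + K" for y
  proof -
    have g: "g y = ennreal (\<integral>x. V (y + x) \<partial>step_law)"
      unfolding g_def by (rule nn_integral_eq_integral) (use integrable nonneg in auto)
    have "ennreal ((\<integral>x. V (y + x) \<partial>step_law) + c * W y) \<le> ennreal (V y + K)"
      by (rule ennreal_leI) (rule drift)
    then show ?thesis
      unfolding g using nonneg by (simp add: ennreal_plus ennreal_mult)
  qed
  have "(\<integral>\<^sup>+\<omega>. V (S (Suc n) \<omega>) \<partial>M) = (\<integral>\<^sup>+\<omega>. g (S n \<omega>) \<partial>M)"
    unfolding g_def by (rule nn_integral_S_Suc) measurable
  then have "(\<integral>\<^sup>+\<omega>. V (S (Suc n) \<omega>) \<partial>M) + c * (\<integral>\<^sup>+\<omega>. W (S n \<omega>) \<partial>M)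
      = (\<integral>\<^sup>+\<omega>. g (S n \<omega>) + c * ennreal (W (S n \<omega>)) \<partial>M)"
    by (simp add: nn_integral_add nn_integral_cmult)
  also have "\<dots> \<le> (\<integral>\<^sup>+\<omega>. ennreal (V (S n \<omega>)) + K \<partial>M)"
    by (intro nn_integral_mono pointwise)
  also have "\<dots> = (\<integral>\<^sup>+\<omega>. V (S n \<omega>) \<partial>M) + K"
    by (simp add: nn_integral_add emeasure_space_1)
  finally show ?thesis .
qed


lemma suminf_prob_N_mult_finite_if_drift:
  fixes v a :: "nat \<Rightarrow> ennreal" and c K :: real
  assumes N_mono: "\<And>n. 1 \<le> n \<Longrightarrow> prob {\<omega>\<in>space M. N \<omega> = Suc n} \<le> prob {\<omega>\<in>space M. N \<omega> = n}"
    and drift: "\<And>n. v (Suc n) + ennreal c * a n \<le> v n + ennreal K"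
    and "v 0 = 0" "a 0 = 0" "0 < c"
  shows "(\<Sum>n. emeasure M {\<omega>\<in>space M. N \<omega> = n} * a n) < \<infinity>"
proof -
  define q where "q n = emeasure M {\<omega>\<in>space M. N \<omega> = max n 1}" for n
  have q_mono: "q (Suc n) \<le> q n" for n
    using N_mono[of n] by (cases n) (auto simp: q_def emeasure_eq_measure)
  have "(\<Sum>n. q n) = (\<Sum>n. q (n + 1)) + (\<Sum>n<1. q n)"
    by (rule suminf_offset) (rule summableI)
  also have "\<dots> = (\<Sum>n. emeasure M {\<omega>\<in>space M. N \<omega> = Suc n}) + q 0"
    by (simp add: q_def)
  also have "(\<Sum>n. emeasure M {\<omega>\<in>space M. N \<omega> = Suc n}) = emeasure M (\<Union>n. {\<omega>\<in>space M. N \<omega> = Suc n})"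
    by (rule suminf_emeasure) (auto simp: disjoint_family_on_def)
  finally have q_sum: "(\<Sum>n. q n) = emeasure M (\<Union>n. {\<omega>\<in>space M. N \<omega> = Suc n}) + q 0" .
  have "(\<Sum>n. q n) \<le> 1 + 1"
    unfolding q_sum by (intro add_mono) (simp_all add: q_def emeasure_le_1)
  then have "ennreal K * (\<Sum>n. q n) < \<infinity>"
    by (simp add: ennreal_mult_less_top le_less_trans)
  then have "ennreal c * (\<Sum>n. q n * a n) < \<infinity>"
    using weighted_suminf_le_if_drift[of q v "ennreal c" a "ennreal K", OF q_mono drift] assms(3)
    by (simp add: le_less_trans)
  then have "(\<Sum>n. q n * a n) < \<infinity>"
    using assms(5) by (auto simp: ennreal_mult_less_top)
  moreover have "(\<Sum>n. emeasure M {\<omega>\<in>space M. N \<omega> = n} * a n) \<le> (\<Sum>n. q n * a n)"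
  proof (intro suminf_le summableI)
    fix n
    show "emeasure M {\<omega>\<in>space M. N \<omega> = n} * a n \<le> q n * a n"
      using assms(4) by (cases n) (simp_all add: q_def)
  qed
  ultimately show ?thesis by (simp add: le_less_trans)
qed

theorem nn_integral_random_sum_pos_part_powr_finite:
  assumes B: "0 < B" and lower: "AE \<omega> in M. -B \<le> X 1 \<omega>"
    and integrable: "integrable M (X 1)" and mean_neg: "expectation (X 1) < 0"
    and s: "0 < s" and moment: "integrable M (\<lambda>\<omega>. max 0 (X 1 \<omega>) powr (s + 1))"
    and N_mono: "\<And>n. 1 \<le> n \<Longrightarrow> prob {\<omega>\<in>space M. N \<omega> = Suc n} \<le> prob {\<omega>\<in>space M. N \<omega> = n}"
  shows "(\<integral>\<^sup>+\<omega>. ennreal (max 0 (S (N \<omega>) \<omega>) powr s) \<partial>M) < \<infinity>"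
proof -
  interpret step: negative_drift step_law B
  proof (intro negative_drift.intro negative_drift_axioms.intro prob_space_step_law sets_step_law B)
    show "integrable step_law (\<lambda>x. x)"
      using integrable unfolding step_law_def by (subst integrable_distr_eq) auto
    show "(\<integral>x. x \<partial>step_law) < 0"
      using mean_neg unfolding step_law_def by (subst integral_distr) auto
    show "AE x in step_law. -B \<le> x"
      using lower unfolding step_law_def by (subst AE_distr_iff) auto
  qed
  have step_moment: "integrable step_law (\<lambda>x. max 0 x powr (s + 1))"
    using moment by (simp add: step_law_def integrable_distr_eq)
  obtain c K where c: "0 < c" and drift:
    "\<And>y. (\<integral>x. max 0 (y + x) powr (s + 1) \<partial>step_law) + c * max 0 y powr s \<le> max 0 y powr (s + 1) + K"
    using step.drift[of "s + 1"] s step_moment by auto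
  have "(\<integral>\<^sup>+\<omega>. ennreal (max 0 (S (N \<omega>) \<omega>) powr s) \<partial>M)
       = (\<Sum>n. emeasure M {\<omega>\<in>space M. N \<omega> = n} * (\<integral>\<^sup>+\<omega>. ennreal (max 0 (S n \<omega>) powr s) \<partial>M))"
    by (rule nn_integral_random_sum) simp
  also have "\<dots> < \<infinity>"
  proof (rule suminf_prob_N_mult_finite_if_drift[OF N_mono _ _ _ c])
    fix n
    show "(\<integral>\<^sup>+\<omega>. max 0 (S (Suc n) \<omega>) powr (s + 1) \<partial>M) + c * (\<integral>\<^sup>+\<omega>. max 0 (S n \<omega>) powr s \<partial>M)
        \<le> (\<integral>\<^sup>+\<omega>. max 0 (S n \<omega>) powr (s + 1) \<partial>M) + max K 0"
    proof (rule partial_sum_drift)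
      fix y
      show "integrable step_law (\<lambda>x. max 0 (y + x) powr (s + 1))"
        using s step_moment by (intro step.integrable_shifted_pos_part_powr) auto
      show "(\<integral>x. max 0 (y + x) powr (s + 1) \<partial>step_law) + c * max 0 y powr s \<le> max 0 y powr (s + 1) + max K 0"
        using drift[of y] by linarith
    qed (use c in auto)
  qed (use s in simp_all)
  finally show ?thesis .
qed

lemma nn_integral_pos_part_powr_S_ge:
  assumes B: "0 < B" and lower: "AE \<omega> in M. -B \<le> X 1 \<omega>" and n: "1 \<le> n" and s: "0 \<le> s"
  shows "ennreal ((real n * B) powr s) * ennreal (prob {\<omega>\<in>space M. \<exists>k\<in>{1..n}. 2 * B * real n < X k \<omega>})
           \<le> (\<integral>\<^sup>+\<omega>. ennreal (max 0 (S n \<omega>) powr s) \<partial>M)"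
proof -
  define E where "E = {\<omega>\<in>space M. \<exists>k\<in>{1..n}. 2 * B * real n < X k \<omega>}"
  have [measurable]: "E \<in> sets M" unfolding E_def by measurable
  have "ennreal ((real n * B) powr s) * ennreal (prob E) = (\<integral>\<^sup>+\<omega>. ennreal ((real n * B) powr s) * indicator E \<omega> \<partial>M)"
    by (simp add: nn_integral_cmult_indicator emeasure_eq_measure)
  also have "\<dots> \<le> (\<integral>\<^sup>+\<omega>. ennreal (max 0 (S n \<omega>) powr s) \<partial>M)"
    using AE_ge_all[OF lower]
  proof (intro nn_integral_mono_AE, eventually_elim)
    case (elim \<omega>)
    show ?case
    proof (cases "\<omega> \<in> E")
      case True
      then obtain k where k: "k \<in> {1..n}" "2 * B * real n < X k \<omega>" by (auto simp: E_def)
      have "2 * B * real n - real (card {1..n} - 1) * B \<le> S n \<omega>"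
        unfolding S_def by (rule sum_ge_if_one_large[where k = k]) (use k elim in auto)
      then have "real n * B \<le> S n \<omega>" using n B by (simp add: of_nat_diff algebra_simps)
      then have "(real n * B) powr s \<le> max 0 (S n \<omega>) powr s"
        using n B s by (intro powr_mono2) auto
      then show ?thesis using True by (simp add: ennreal_leI)
    qed simp
  qed
  finally show ?thesis unfolding E_def .
qed

lemma prob_exists_X_gt_ge:
  assumes t: "0 < t" and \<alpha>: "1 \<le> \<alpha>" and n: "1 \<le> n" and c: "0 < c"
    and tail: "c * (t * real n) powr (-\<alpha>) \<le> prob {\<omega>\<in>space M. t * real n < X 1 \<omega>}"
  shows "min (c * t powr (-\<alpha>)) 1 * real n powr (1 - \<alpha>) / 2
           \<le> prob {\<omega>\<in>space M. \<exists>k\<in>{1..n}. t * real n < X k \<omega>}"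
proof -
  define p where "p = prob {\<omega>\<in>space M. t * real n < X 1 \<omega>}"
  have "real n * (c * t powr (-\<alpha>) * real n powr (-\<alpha>)) \<le> real n * p"
    using tail t by (intro mult_left_mono) (auto simp: p_def powr_mult mult_ac)
  moreover have "real n * real n powr (-\<alpha>) = real n powr (1 - \<alpha>)"
    using n powr_mult_base[of "real n" "-\<alpha>"] by simp
  ultimately have "c * t powr (-\<alpha>) * real n powr (1 - \<alpha>) \<le> real n * p"
    by (metis mult.commute mult.left_commute)
  moreover have "real n powr (1 - \<alpha>) \<le> 1" using powr_mono[of "1 - \<alpha>" 0 "real n"] n \<alpha> by simp
  moreover have "min (c * t powr (-\<alpha>)) 1 * real n powr (1 - \<alpha>) \<le> c * t powr (-\<alpha>) * real n powr (1 - \<alpha>)"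
    by (intro mult_right_mono) auto
  ultimately have "min (c * t powr (-\<alpha>)) 1 * real n powr (1 - \<alpha>) \<le> min (real n * p) 1"
    using c t by (intro min.boundedI) (auto intro: mult_le_one)
  also have "min (real n * p) 1 / 2 \<le> prob {\<omega>\<in>space M. \<exists>k\<in>{1..n}. t * real n < X k \<omega>}"
    unfolding prob_exists_X_gt[OF n] p_def by (rule one_minus_power_ge) auto
  finally show ?thesis by simp
qed

theorem nn_integral_random_sum_pos_part_powr_infinite:
  assumes B: "0 < B" and lower: "AE \<omega> in M. -B \<le> X 1 \<omega>"
    and \<alpha>: "1 \<le> \<alpha>" and s: "0 \<le> s" "\<alpha> + \<eta> - 1 \<le> s"
    and c: "0 < c" and tail: "eventually (\<lambda>x. c * x powr (-\<alpha>) \<le> prob {\<omega>\<in>space M. x < X 1 \<omega>}) at_top"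
    and c': "0 < c'" and N_law: "\<And>n. 1 \<le> n \<Longrightarrow> c' * real n powr (-(1 + \<eta>)) \<le> prob {\<omega>\<in>space M. N \<omega> = n}"
  shows "(\<integral>\<^sup>+\<omega>. ennreal (max 0 (S (N \<omega>) \<omega>) powr s) \<partial>M) = \<infinity>"
proof -
  obtain x0 where x0: "\<And>x. x0 \<le> x \<Longrightarrow> c * x powr (-\<alpha>) \<le> prob {\<omega>\<in>space M. x < X 1 \<omega>}"
    using tail by (auto simp: eventually_at_top_linorder)
  define \<gamma> where "\<gamma> = min (c * (2 * B) powr (-\<alpha>)) 1"
  define \<kappa> where "\<kappa> = c' * B powr s * \<gamma> / 2"
  have \<gamma>: "0 < \<gamma>" "\<gamma> \<le> 1" using c B by (auto simp: \<gamma>_def)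
  have \<kappa>: "0 < \<kappa>" using c' B \<gamma> by (simp add: \<kappa>_def)
  define n0 where "n0 = nat \<lceil>max 1 (x0 / (2 * B))\<rceil>"
  have "ennreal (\<kappa> / real n) \<le> emeasure M {\<omega>\<in>space M. N \<omega> = n} * (\<integral>\<^sup>+\<omega>. ennreal (max 0 (S n \<omega>) powr s) \<partial>M)"
    if n: "n0 \<le> n" for n
  proof -
    have "max 1 (x0 / (2 * B)) \<le> real n" using n unfolding n0_def by linarith
    then have n1: "1 \<le> n" and nx0: "x0 \<le> 2 * B * real n" using B by (auto simp: field_simps)
    have big: "\<gamma> * real n powr (1 - \<alpha>) / 2 \<le> prob {\<omega>\<in>space M. \<exists>k\<in>{1..n}. 2 * B * real n < X k \<omega>}"
      unfolding \<gamma>_def using x0[of "2 * B * real n"] nx0 B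
      by (intro prob_exists_X_gt_ge[OF _ \<alpha> n1 c]) (auto simp: mult_ac)
    have "\<kappa> / real n = \<kappa> * real n powr (-1)" using n1 by (simp add: powr_minus_divide)
    also have "\<dots> \<le> \<kappa> * real n powr (s - \<eta> - \<alpha>)"
      using \<kappa> s n1 by (intro mult_left_mono powr_mono) auto
    also have "\<dots> = c' * real n powr (-(1 + \<eta>)) * ((real n * B) powr s * (\<gamma> * real n powr (1 - \<alpha>) / 2))"
      using n1 B by (simp add: \<kappa>_def powr_mult powr_add[symmetric] field_simps)
    finally have real_bound: "\<kappa> / real n \<le> c' * real n powr (-(1 + \<eta>)) * ((real n * B) powr s * (\<gamma> * real n powr (1 - \<alpha>) / 2))" .
    have "ennreal (\<kappa> / real n) \<le> ennreal (c' * real n powr (-(1 + \<eta>))) * (ennreal ((real n * B) powr s) * ennreal (\<gamma> * real n powr (1 - \<alpha>) / 2))"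
      using real_bound c' \<gamma> by (simp add: ennreal_mult[symmetric] ennreal_leI)
    also have "\<dots> \<le> emeasure M {\<omega>\<in>space M. N \<omega> = n} * (\<integral>\<^sup>+\<omega>. ennreal (max 0 (S n \<omega>) powr s) \<partial>M)"
    proof (intro mult_mono)
      show "ennreal (c' * real n powr (-(1 + \<eta>))) \<le> emeasure M {\<omega>\<in>space M. N \<omega> = n}"
        using N_law[OF n1] by (simp add: emeasure_eq_measure ennreal_leI)
      have "ennreal ((real n * B) powr s) * ennreal (\<gamma> * real n powr (1 - \<alpha>) / 2)
          \<le> ennreal ((real n * B) powr s) * ennreal (prob {\<omega>\<in>space M. \<exists>k\<in>{1..n}. 2 * B * real n < X k \<omega>})"
        using big by (intro mult_left_mono ennreal_leI) auto
      also have "\<dots> \<le> (\<integral>\<^sup>+\<omega>. ennreal (max 0 (S n \<omega>) powr s) \<partial>M)"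
        by (rule nn_integral_pos_part_powr_S_ge[OF B lower n1 s(1)])
      finally show "ennreal ((real n * B) powr s) * ennreal (\<gamma> * real n powr (1 - \<alpha>) / 2)
          \<le> (\<integral>\<^sup>+\<omega>. ennreal (max 0 (S n \<omega>) powr s) \<partial>M)" .
    qed auto
    finally show ?thesis .
  qed
  then have "(\<Sum>n. emeasure M {\<omega>\<in>space M. N \<omega> = n} * (\<integral>\<^sup>+\<omega>. ennreal (max 0 (S n \<omega>) powr s) \<partial>M)) = \<infinity>"
    by (rule suminf_ennreal_eq_top_if_ge_inverse[OF \<kappa>])
  then show ?thesis by (subst nn_integral_random_sum) simp_all
qed

end

section \<open>The moment index of the random sum\<close>

lemma moment_index_between:
  fixes Y :: "'a \<Rightarrow> real" and a b :: real
  assumes a: "0 < a"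
    and finite: "\<And>s. 0 < s \<Longrightarrow> s < a \<Longrightarrow> (\<integral>\<^sup>+\<omega>. ennreal (max 0 (Y \<omega>) powr s) \<partial>M) < \<infinity>"
    and infinite: "\<And>s. b < s \<Longrightarrow> (\<integral>\<^sup>+\<omega>. ennreal (max 0 (Y \<omega>) powr s) \<partial>M) = \<infinity>"
  shows "ereal a \<le> moment_index M Y \<and> moment_index M Y \<le> ereal b"
proof
  define T where "T = {s. 0 \<le> s \<and> (\<integral>\<^sup>+\<omega>. ennreal (max 0 (Y \<omega>) powr s) \<partial>M) < \<infinity>}"
  have index: "moment_index M Y = Sup (ereal ` T)"
    unfolding moment_index_def T_def ..
  show "ereal a \<le> moment_index M Y"
    unfolding index
  proof (rule dense_le_bounded)
    show "ereal (a / 2) < ereal a" using a by simp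
    fix w assume "ereal (a / 2) < w" "w < ereal a"
    then obtain t where t: "w = ereal t" "0 < t" "t < a" using a by (cases w) auto
    then have "t \<in> T" unfolding T_def using finite by auto
    then show "w \<le> Sup (ereal ` T)" unfolding t by (intro Sup_upper) auto
  qed
  show "moment_index M Y \<le> ereal b"
    unfolding index using infinite by (auto simp: T_def intro!: Sup_least) (metis less_top not_le)
qed

lemma summable_Suc_powr:
  fixes \<eta> :: real
  assumes "0 < \<eta>"
  shows "summable (\<lambda>k. real (Suc k) powr (-(1 + \<eta>)))"
proof -
  have "summable (\<lambda>k. real k powr (-(1 + \<eta>)))" using assms by (subst summable_real_powr_iff) simp
  then show ?thesis by (subst (asm) summable_iff_shift[of _ 1, symmetric]) simp
qed

theorem mainTheorem13:
  fixes M :: "'a measure" and Xs :: "nat \<Rightarrow> 'a \<Rightarrow> real" and N :: "'a \<Rightarrow> nat"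
    and B \<alpha> \<eta> C :: real
  assumes "prob_space M"
    and indep: "prob_space.indep_vars M (\<lambda>_. borel)
                  (\<lambda>i. if i = 0 then (\<lambda>\<omega>. real (N \<omega>)) else Xs i) UNIV"
    and ident: "\<And>i. i \<ge> 1 \<Longrightarrow> distr M borel (Xs i) = distr M borel (Xs 1)"
    and B_pos: "B > 0"
    and lower: "AE \<omega> in M. Xs 1 \<omega> \<ge> - B"
    and neg_mean: "integral\<^sup>L M (Xs 1) < 0"
    and \<alpha>: "\<alpha> > 1"
    and tail: "(\<lambda>x. measure M {\<omega> \<in> space M. Xs 1 \<omega> > x}) \<sim>[at_top] (\<lambda>x. x powr (- \<alpha>))"
    and \<eta>: "\<eta> > 0"
    and C_def: "C = 1 / (\<Sum>k. real (Suc k) powr (- (1 + \<eta>)))"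
    and N_law: "\<And>k. k \<ge> 1 \<Longrightarrow> measure M {\<omega> \<in> space M. N \<omega> = k} = C * real k powr (- (1 + \<eta>))"
  shows "ereal (\<alpha> - 1) \<le> moment_index M (\<lambda>\<omega>. \<Sum>k = 1..N \<omega>. Xs k \<omega>)
       \<and> moment_index M (\<lambda>\<omega>. \<Sum>k = 1..N \<omega>. Xs k \<omega>) \<le> ereal (\<alpha> + \<eta> - 1)"
proof -
  interpret iid_random_sum M Xs N
    by (intro iid_random_sum.intro iid_random_sum_axioms.intro assms(1) indep ident)
  have integrable: "integrable M (Xs 1)"
    using neg_mean not_integrable_integral_eq by fastforce
  have tail_upper: "eventually (\<lambda>x. prob {\<omega>\<in>space M. x < Xs 1 \<omega>} \<le> 2 * x powr (-\<alpha>)) at_top"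
    using asymp_equiv_imp_eventually_le[OF tail, of 2] by simp
  have tail_lower: "eventually (\<lambda>x. 1 / 2 * x powr (-\<alpha>) \<le> prob {\<omega>\<in>space M. x < Xs 1 \<omega>}) at_top"
    using asymp_equiv_imp_eventually_ge[OF tail, of "1 / 2"] by simp
  have C: "0 < C"
    using suminf_pos[OF summable_Suc_powr[OF \<eta>]] by (simp add: C_def)
  have N_mono: "prob {\<omega>\<in>space M. N \<omega> = Suc n} \<le> prob {\<omega>\<in>space M. N \<omega> = n}" if "1 \<le> n" for n
    using that \<eta> C by (simp add: N_law del: of_nat_Suc) (intro mult_left_mono powr_mono2'; simp)
  have "ereal (\<alpha> - 1) \<le> moment_index M (\<lambda>\<omega>. S (N \<omega>) \<omega>) \<and> moment_index M (\<lambda>\<omega>. S (N \<omega>) \<omega>) \<le> ereal (\<alpha> + \<eta> - 1)"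
  proof (rule moment_index_between)
    fix s assume "0 < s" "s < \<alpha> - 1"
    moreover from this have "integrable M (\<lambda>\<omega>. max 0 (Xs 1 \<omega>) powr (s + 1))"
      by (intro integrable_pos_part_powr_if_tail[OF _ _ _ tail_upper]) simp_all
    ultimately show "(\<integral>\<^sup>+\<omega>. ennreal (max 0 (S (N \<omega>) \<omega>) powr s) \<partial>M) < \<infinity>"
      by (intro nn_integral_random_sum_pos_part_powr_finite[OF B_pos lower integrable neg_mean] N_mono)
  next
    fix s assume "\<alpha> + \<eta> - 1 < s"
    then show "(\<integral>\<^sup>+\<omega>. ennreal (max 0 (S (N \<omega>) \<omega>) powr s) \<partial>M) = \<infinity>"
      using \<alpha> \<eta> C
      by (intro nn_integral_random_sum_pos_part_powr_infinite[OF B_pos lower _ _ _ _ tail_lower _ N_law[symmetric, THEN eq_refl]])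
        simp_all
  qed (use \<alpha> in simp)
  then show ?thesis by (simp add: S_def)
qed

end
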